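(* Let $\odot$ be a non-degenerate pseudo-multiplication, and let $\tau$ be a $\sigma$-maxitive measure on a $\sigma$-algebra $\mathcal{B}$ of subsets of a nonempty set $E$. Then $\tau$ has the Radon–Nikodym property with respect to the idempotent $\odot$-integral if and only if $\tau$ is $\sigma$-$\odot$-finite and $\sigma$-principal.
   Context: Write $\overline{\mathbb{R}}_+=[0,\infty]$ and $\oplus$ for the supremum. A pseudo-multiplication is a binary operation $\odot$ on $\overline{\mathbb{R}}_+$ with the following properties: - it is associative; - it is continuous on $(0,\infty)\times[0,\infty]$; - for every $t$, the map $s\mapsto s\odot t$ is continuous on $(0,\infty]$; - it is nondecreasing in each argument; - it has a left identity $1_\odot$, i.e. $1_\odot\odot t=t$ for all $t$; - it has no zero divisors, i.e. $s\odot t=0$ implies $s=0$ or $t=0$; - $0\odot t=t\odot 0=0$ for all $t$. Put $O(t)=\inf_{s>0}s\odot t$. An element $t$ is $\odot$-finite if $O(t)=0$, and $\odot$-infinite otherwise. The operation $\odot$ is non-degenerate if $1_\odot$ is $\odot$-finite. Let $\mathcal{B}$ be a $\sigma$-algebra on $E$. A $\sigma$-ideal of $\mathcal{B}$ is a nonempty $\mathcal{I}\subset\mathcal{B}$ that is closed under countable unions and satisfies: $A\subset B\in\mathcal{I}$ with $A\in\mathcal{B}$ implies $A\in\mathcal{I}$. A $\sigma$-maxitive measure on $\mathcal{B}$ is a map $\nu:\mathcal{B}\to\overline{\mathbb{R}}_+$ with $\nu(\emptyset)=0$ and $\nu(\bigcup_{j\in J}B_j)=\sup_{j\in J}\nu(B_j)$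 for every countable family $(B_j)_{j\in J}$ in $\mathcal{B}$. A set $N\subset E$ is $\tau$-negligible if $N\subset B$ for some $B\in\mathcal{B}$ with $\tau(B)=0$. A map $f:E\to\overline{\mathbb{R}}_+$ is $\mathcal{B}$-measurable if $\{f>t\}\in\mathcal{B}$ for all $t\in[0,\infty)$. The idempotent $\odot$-integral of such $f$ over $B\in\mathcal{B}$ is $\int^\infty_B f\odot d\nu=\sup_{t\in[0,\infty)} t\odot\nu(B\cap\{f>t\})$. Let $\nu,\tau$ be $\sigma$-maxitive measures on $\mathcal{B}$. - $\nu$ has a density with respect to $\tau$ if there is a $\mathcal{B}$-measurable $c:E\to\overline{\mathbb{R}}_+$ with $\nu(B)=\int^\infty_B c\odot d\tau$ for all $B\in\mathcal{B}$. - $\nu$ is $\odot$-absolutely continuous with respect to $\tau$, written $\nu\ll_\odot\tau$, if $\nu(B)\le\infty\odot\tau(B)$ for every $B\in\mathcal{B}$ such that $\tau(B)$ is $\odot$-finite. - $\tau$ has the Radon–Nikodym property (with respect to the idempotent $\odot$-integral) if every $\sigma$-maxitive measure $\nu$ on $\mathcal{B}$ with $\nu\ll_\odot\tau$ has a density with respect to $\tau$. - $\tau$ is $\sigma$-$\odot$-finite if there is a countable family $(B_n)$ in $\mathcal{B}$ covering $E$ with each $\tau(B_n)$ $\odot$-finite. - $\tau$ is $\sigma$-principal if for every $\sigma$-ideal $\mathcal{I}$ of $\mathcal{B}$ there is $L\in\mathcal{I}$ such that $S\setminus L$ is $\tau$-negligible for all $S\in\mathcal{I}$. *)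

theory Defs
  imports "HOL-Analysis.Analysis"
begin

definition pseudo_mult :: "(ennreal \<Rightarrow> ennreal \<Rightarrow> ennreal) \<Rightarrow> ennreal \<Rightarrow> bool" where
  "pseudo_mult odot one \<longleftrightarrow>
     (\<forall>a b c. odot (odot a b) c = odot a (odot b c)) \<and>
     continuous_on ({0<..<top} \<times> UNIV) (\<lambda>(s, t). odot s t) \<and>
     (\<forall>t. continuous_on {0<..} (\<lambda>s. odot s t)) \<and>
     (\<forall>a b c. a \<le> b \<longrightarrow> odot a c \<le> odot b c \<and> odot c a \<le> odot c b) \<and>
     (\<forall>t. odot one t = t) \<and>
     (\<forall>s t. odot s t = 0 \<longrightarrow> s = 0 \<or> t = 0) \<and>
     (\<forall>t. odot 0 t = 0 \<and> odot t 0 = 0)"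

definition O_odot :: "(ennreal \<Rightarrow> ennreal \<Rightarrow> ennreal) \<Rightarrow> ennreal \<Rightarrow> ennreal" where
  "O_odot odot t = (INF s\<in>{0<..}. odot s t)"

definition odot_finite :: "(ennreal \<Rightarrow> ennreal \<Rightarrow> ennreal) \<Rightarrow> ennreal \<Rightarrow> bool" where
  "odot_finite odot t \<longleftrightarrow> O_odot odot t = 0"

definition non_degenerate :: "(ennreal \<Rightarrow> ennreal \<Rightarrow> ennreal) \<Rightarrow> ennreal \<Rightarrow> bool" where
  "non_degenerate odot one \<longleftrightarrow> odot_finite odot one"

definition sigma_ideal :: "'a set set \<Rightarrow> 'a set set \<Rightarrow> bool" where
  "sigma_ideal B I \<longleftrightarrow> I \<noteq> {} \<and> I \<subseteq> B \<and>
     (\<forall>F. countable F \<and> F \<subseteq> I \<longrightarrow> \<Union>F \<in> I) \<and>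
     (\<forall>A S. A \<in> B \<and> S \<in> I \<and> A \<subseteq> S \<longrightarrow> A \<in> I)"

definition sigma_maxitive :: "'a set set \<Rightarrow> ('a set \<Rightarrow> ennreal) \<Rightarrow> bool" where
  "sigma_maxitive B nu \<longleftrightarrow> nu {} = 0 \<and>
     (\<forall>F. countable F \<and> F \<subseteq> B \<longrightarrow> nu (\<Union>F) = (SUP A\<in>F. nu A))"

definition negligible :: "'a set set \<Rightarrow> ('a set \<Rightarrow> ennreal) \<Rightarrow> 'a set \<Rightarrow> bool" where
  "negligible B tau N \<longleftrightarrow> (\<exists>A\<in>B. N \<subseteq> A \<and> tau A = 0)"

definition B_measurable :: "'a set \<Rightarrow> 'a set set \<Rightarrow> ('a \<Rightarrow> ennreal) \<Rightarrow> bool" where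
  "B_measurable E B f \<longleftrightarrow> (\<forall>t. t < top \<longrightarrow> {x\<in>E. t < f x} \<in> B)"

definition idem_integral ::
  "(ennreal \<Rightarrow> ennreal \<Rightarrow> ennreal) \<Rightarrow> 'a set \<Rightarrow> ('a \<Rightarrow> ennreal) \<Rightarrow> ('a set \<Rightarrow> ennreal) \<Rightarrow> 'a set \<Rightarrow> ennreal" where
  "idem_integral odot E f nu A = (SUP t\<in>{t. t < top}. odot t (nu (A \<inter> {x\<in>E. t < f x})))"

definition has_density ::
  "(ennreal \<Rightarrow> ennreal \<Rightarrow> ennreal) \<Rightarrow> 'a set \<Rightarrow> 'a set set \<Rightarrow> ('a set \<Rightarrow> ennreal) \<Rightarrow> ('a set \<Rightarrow> ennreal) \<Rightarrow> bool" where
  "has_density odot E B nu tau \<longleftrightarrow>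
     (\<exists>c. B_measurable E B c \<and> (\<forall>A\<in>B. nu A = idem_integral odot E c tau A))"

definition odot_abs_cont ::
  "(ennreal \<Rightarrow> ennreal \<Rightarrow> ennreal) \<Rightarrow> 'a set set \<Rightarrow> ('a set \<Rightarrow> ennreal) \<Rightarrow> ('a set \<Rightarrow> ennreal) \<Rightarrow> bool" where
  "odot_abs_cont odot B nu tau \<longleftrightarrow>
     (\<forall>A\<in>B. odot_finite odot (tau A) \<longrightarrow> nu A \<le> odot top (tau A))"

definition radon_nikodym_property ::
  "(ennreal \<Rightarrow> ennreal \<Rightarrow> ennreal) \<Rightarrow> 'a set \<Rightarrow> 'a set set \<Rightarrow> ('a set \<Rightarrow> ennreal) \<Rightarrow> bool" where
  "radon_nikodym_property odot E B tau \<longleftrightarrow>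
     (\<forall>nu. sigma_maxitive B nu \<and> odot_abs_cont odot B nu tau \<longrightarrow> has_density odot E B nu tau)"

definition sigma_odot_finite ::
  "(ennreal \<Rightarrow> ennreal \<Rightarrow> ennreal) \<Rightarrow> 'a set \<Rightarrow> 'a set set \<Rightarrow> ('a set \<Rightarrow> ennreal) \<Rightarrow> bool" where
  "sigma_odot_finite odot E B tau \<longleftrightarrow>
     (\<exists>F. countable F \<and> F \<subseteq> B \<and> \<Union>F = E \<and> (\<forall>A\<in>F. odot_finite odot (tau A)))"

definition sigma_principal :: "'a set set \<Rightarrow> ('a set \<Rightarrow> ennreal) \<Rightarrow> bool" where
  "sigma_principal B tau \<longleftrightarrow>
     (\<forall>I. sigma_ideal B I \<longrightarrow> (\<exists>L\<in>I. \<forall>S\<in>I. negligible B tau (S - L)))"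

end

theory Submission
  imports Defs
begin

text \<open>
  Necessity. Applying the Radon-Nikodym property to the truncation \<open>min 1\<^sub>\<odot> \<tau>\<close> gives a
  density \<open>c\<close> with \<open>r \<odot> \<tau>{c > r} \<le> 1\<^sub>\<odot>\<close>, so the sets \<open>{c > r}\<close> (\<open>r > 0\<close> rational) are
  \<open>\<odot>\<close>-finite, while \<open>{c = 0}\<close> is \<open>\<tau>\<close>-null. For a \<open>\<sigma>\<close>-ideal \<open>I\<close>, the quotient measure
  \<open>A \<mapsto> inf\<^sub>S\<^sub>\<in>\<^sub>I \<tau>(A - S)\<close> is \<open>\<sigma>\<close>-maxitive and vanishes on \<open>I\<close>; its density is therefore
  \<open>0\<close> almost everywhere on each member of \<open>I\<close>, and an optimal \<open>S\<^sub>0 \<in> I\<close> for the set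
  \<open>{c = 0}\<close> yields the principal element \<open>{c = 0} \<inter> S\<^sub>0\<close>.

  Sufficiency. For \<open>\<nu> \<ll>\<^sub>\<odot> \<tau>\<close> and finite \<open>q\<close>, \<open>\<sigma>\<close>-principality of the ideal of sets on which
  \<open>\<nu> \<le> q \<odot> \<tau>\<close> gives a Hahn-type decomposition \<open>L\<^sub>q\<close>, with \<open>q \<odot> \<tau> \<le> \<nu>\<close> off \<open>L\<^sub>q\<close>.
  Made increasing along the rationals, these sets define the density
  \<open>c(x) = inf {r. x \<in> L\<^sub>r}\<close>. The bound \<open>\<integral> c \<odot> d\<tau> \<le> \<nu>\<close> uses left continuity of \<open>\<odot>\<close> in its
  second argument; the reverse bound on a \<open>\<odot>\<close>-finite set uses continuity of \<open>\<odot>\<close> in its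
  first argument at the critical level \<open>inf {r. \<nu>(D \<inter> L\<^sub>r) > \<rho>}\<close>, and \<open>\<sigma>\<close>-\<open>\<odot>\<close>-finiteness
  extends it to all sets.
\<close>

lemma ennreal_le_of_isCont_from_below:
  fixes f :: "ennreal \<Rightarrow> ennreal"
  assumes cont: "isCont f a" and a: "0 < a" and below: "\<And>s. 0 < s \<Longrightarrow> s < a \<Longrightarrow> f s \<le> R"
  shows "f a \<le> R"
proof (rule tendsto_upperbound)
  show "(f \<longlongrightarrow> f a) (at_left a)"
    using cont by (auto simp: isCont_def intro: tendsto_mono[OF at_le])
  show "eventually (\<lambda>s. f s \<le> R) (at_left a)"
    unfolding eventually_at_left[OF a] using a below by (metis order.strict_trans1 zero_le)
  show "\<not> trivial_limit (at_left a)"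
    unfolding trivial_limit_def eventually_at_left[OF a] by (meson dense)
qed

locale pseudo_multiplication =
  fixes odot :: "ennreal \<Rightarrow> ennreal \<Rightarrow> ennreal" (infixl "\<odot>" 70) and one :: ennreal
  assumes pseudo_mult: "pseudo_mult odot one"
begin

lemma odot_assoc: "a \<odot> b \<odot> c = a \<odot> (b \<odot> c)"
  and odot_mono_left: "a \<le> b \<Longrightarrow> a \<odot> c \<le> b \<odot> c"
  and odot_mono_right: "a \<le> b \<Longrightarrow> c \<odot> a \<le> c \<odot> b"
  and odot_one_left [simp]: "one \<odot> t = t"
  and odot_zero_left [simp]: "0 \<odot> t = 0"
  and odot_zero_right [simp]: "t \<odot> 0 = 0"
  and no_zero_divisors: "s \<odot> t = 0 \<Longrightarrow> s = 0 \<or> t = 0"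
  and continuous_on_odot: "continuous_on ({0<..<top} \<times> UNIV) (\<lambda>(s, t). s \<odot> t)"
  and continuous_on_odot_left: "continuous_on {0<..} (\<lambda>s. s \<odot> t)"
  using pseudo_mult unfolding pseudo_mult_def by simp_all

lemma odot_mono: "a \<le> b \<Longrightarrow> c \<le> d \<Longrightarrow> a \<odot> c \<le> b \<odot> d"
  using odot_mono_left odot_mono_right order_trans by blast

lemma odot_eq_0_iff [simp]: "s \<odot> t = 0 \<longleftrightarrow> s = 0 \<or> t = 0"
  using no_zero_divisors by auto

lemma one_neq_zero: "one \<noteq> 0"
proof
  assume "one = 0"
  then have "one \<odot> 1 = 0" by simp
  then show False by simp
qed

lemma le_top_odot: "t \<le> top \<odot> t"
  using odot_mono[of one top t t] by simp

lemma isCont_odot_left: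
  assumes "0 < a" shows "isCont (\<lambda>s. s \<odot> y) a"
  using continuous_on_odot_left assms continuous_on_eq_continuous_at[OF open_greaterThan] by auto

lemma isCont_odot_right:
  assumes "0 < q" "q < top" shows "isCont (\<lambda>y. q \<odot> y) y"
proof -
  have "continuous_on UNIV (\<lambda>y. (\<lambda>(s, t). s \<odot> t) (q, y))"
    by (rule continuous_on_compose2[OF continuous_on_odot]) (auto intro!: continuous_intros simp: assms)
  then show ?thesis by (simp add: continuous_on_eq_continuous_at)
qed

lemma odot_le_of_left_approx:
  "0 < a \<Longrightarrow> (\<And>t. 0 < t \<Longrightarrow> t < a \<Longrightarrow> t \<odot> y \<le> R) \<Longrightarrow> a \<odot> y \<le> R"
  by (rule ennreal_le_of_isCont_from_below[OF isCont_odot_left])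

lemma odot_le_of_right_approx:
  assumes q: "q < top" and below: "\<And>y. y < a \<Longrightarrow> q \<odot> y \<le> R"
  shows "q \<odot> a \<le> R"
proof (cases "q = 0 \<or> a = 0")
  case False
  then have "0 < q" "0 < a" by (simp_all add: zero_less_iff_neq_zero)
  then show ?thesis
    using ennreal_le_of_isCont_from_below[OF isCont_odot_right[OF _ q]] below by blast
qed auto

lemma odot_less_right_neighbourhood:
  assumes a: "a < top" and less: "a \<odot> y < \<rho>" and pos_or_finite: "0 < a \<or> odot_finite odot y"
  shows "\<exists>b>a. \<forall>s. a \<le> s \<longrightarrow> s < b \<longrightarrow> s \<odot> y < \<rho>"
proof (cases "0 < a")
  case True
  have "((\<lambda>s. s \<odot> y) \<longlongrightarrow> a \<odot> y) (at_right a)"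
    using isCont_odot_left[OF True] by (auto simp: isCont_def intro: tendsto_mono[OF at_le])
  from order_tendstoD(2)[OF this less] obtain b where "a < b" "\<And>s. a < s \<Longrightarrow> s < b \<Longrightarrow> s \<odot> y < \<rho>"
    unfolding eventually_at_right[OF a] by blast
  then show ?thesis using less by (auto simp: le_less)
next
  case False
  then have "a = 0" by simp
  with pos_or_finite less have "O_odot odot y < \<rho>"
    by (simp add: odot_finite_def)
  then obtain b where b: "0 < b" "b \<odot> y < \<rho>"
    unfolding O_odot_def INF_less_iff by auto
  have "s \<odot> y < \<rho>" if "s < b" for s
  proof -
    have "s \<odot> y \<le> b \<odot> y" using that by (simp add: odot_mono)
    then show ?thesis using b(2) by simp
  qed
  then show ?thesis using \<open>a = 0\<close> b(1) by blast
qed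

lemma odot_Sup_below_le:
  assumes "q < top" shows "q \<odot> Sup {y. q \<odot> y < \<beta>} \<le> \<beta>"
proof (rule odot_le_of_right_approx[OF assms])
  fix y assume "y < Sup {y. q \<odot> y < \<beta>}"
  then obtain y' where "q \<odot> y' < \<beta>" "y < y'" unfolding less_Sup_iff by blast
  moreover have "q \<odot> y \<le> q \<odot> y'" using \<open>y < y'\<close> by (simp add: odot_mono)
  ultimately show "q \<odot> y \<le> \<beta>" by simp
qed

lemma odot_finite_0: "odot_finite odot 0"
proof -
  have "(1::ennreal) \<in> {0<..}" by simp
  then have "{0<..} \<noteq> ({} :: ennreal set)" by blast
  then show ?thesis unfolding odot_finite_def O_odot_def by simp
qed

lemma odot_finite_mono:
  assumes "odot_finite odot y" "y' \<le> y" shows "odot_finite odot y'"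
proof -
  have "O_odot odot y' \<le> O_odot odot y"
    unfolding O_odot_def by (rule INF_mono) (use odot_mono assms(2) in blast)
  then show ?thesis using assms(1) unfolding odot_finite_def by simp
qed

lemma odot_finite_of_odot_le:
  assumes t: "0 < t" and le: "t \<odot> y \<le> u" and u: "odot_finite odot u"
  shows "odot_finite odot y"
proof -
  have "O_odot odot y \<le> O_odot odot u"
    unfolding O_odot_def
  proof (rule INF_greatest)
    fix s :: ennreal assume s: "s \<in> {0<..}"
    then have "(INF s\<in>{0<..}. s \<odot> y) \<le> s \<odot> t \<odot> y"
      using t by (intro INF_lower) (simp add: zero_less_iff_neq_zero)
    also have "\<dots> \<le> s \<odot> u"
      unfolding odot_assoc using le by (simp add: odot_mono)
    finally show "(INF s\<in>{0<..}. s \<odot> y) \<le> s \<odot> u" .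
  qed
  then show ?thesis using u unfolding odot_finite_def by simp
qed

end

lemma sigma_ideal_sets: "sigma_ideal B I \<Longrightarrow> S \<in> I \<Longrightarrow> S \<in> B"
  unfolding sigma_ideal_def by blast

lemma sigma_ideal_UN:
  "sigma_ideal B I \<Longrightarrow> countable J \<Longrightarrow> (\<And>j. j \<in> J \<Longrightarrow> S j \<in> I) \<Longrightarrow> (\<Union>j\<in>J. S j) \<in> I"
  unfolding sigma_ideal_def by (metis countable_image image_subsetI)

lemma sigma_ideal_downward: "sigma_ideal B I \<Longrightarrow> A \<in> B \<Longrightarrow> S \<in> I \<Longrightarrow> A \<subseteq> S \<Longrightarrow> A \<in> I"
  unfolding sigma_ideal_def by blast

lemma sigma_ideal_empty: "sigma_ideal B I \<Longrightarrow> {} \<in> B \<Longrightarrow> {} \<in> I"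
  unfolding sigma_ideal_def by blast

lemma sigma_ideal_Collect:
  assumes sa: "sigma_algebra E B" and "P {}"
    and Union: "\<And>F. countable F \<Longrightarrow> F \<subseteq> B \<Longrightarrow> \<Union>F \<in> B \<Longrightarrow> (\<forall>X\<in>F. P X) \<Longrightarrow> P (\<Union>F)"
    and downward: "\<And>A S. A \<in> B \<Longrightarrow> S \<in> B \<Longrightarrow> A \<subseteq> S \<Longrightarrow> P S \<Longrightarrow> P A"
  shows "sigma_ideal B {X \<in> B. P X}"
  unfolding sigma_ideal_def
proof (intro conjI allI impI)
  have "{} \<in> B" using sigma_algebra.countable_Union[OF sa, of "{}"] by simp
  then show "{X \<in> B. P X} \<noteq> {}" using \<open>P {}\<close> by blast
  fix F assume "countable F \<and> F \<subseteq> {X \<in> B. P X}"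
  moreover then have "\<Union>F \<in> B" using sigma_algebra.countable_Union[OF sa] by blast
  ultimately show "\<Union>F \<in> {X \<in> B. P X}" using Union by blast
qed (use downward in auto)

locale maxitive = sigma_algebra E B for E :: "'a set" and B +
  fixes mu :: "'a set \<Rightarrow> ennreal"
  assumes sigma_maxitive: "sigma_maxitive B mu"
begin

lemma measure_empty [simp]: "mu {} = 0"
  using sigma_maxitive unfolding sigma_maxitive_def by blast

lemma measure_Union: "countable F \<Longrightarrow> F \<subseteq> B \<Longrightarrow> mu (\<Union>F) = (SUP A\<in>F. mu A)"
  using sigma_maxitive unfolding sigma_maxitive_def by blast

lemma measure_UN:
  "countable I \<Longrightarrow> (\<And>i. i \<in> I \<Longrightarrow> A i \<in> B) \<Longrightarrow> mu (\<Union>i\<in>I. A i) = (SUP i\<in>I. mu (A i))"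
  using measure_Union[of "A ` I"] by (simp add: image_subsetI image_comp)

lemma measure_Un: "A \<in> B \<Longrightarrow> C \<in> B \<Longrightarrow> mu (A \<union> C) = max (mu A) (mu C)"
  using measure_Union[of "{A, C}"] by (simp add: sup_max)

lemma measure_mono: "A \<in> B \<Longrightarrow> C \<in> B \<Longrightarrow> A \<subseteq> C \<Longrightarrow> mu A \<le> mu C"
  using measure_Un[of A C] by (metis max.cobounded1 sup.absorb2)

lemma less_measure_Diff:
  assumes "A \<in> B" "M \<in> B" "mu (A \<inter> M) \<le> \<rho>" "\<rho> < mu A" shows "\<rho> < mu (A - M)"
proof -
  have "mu A = max (mu (A \<inter> M)) (mu (A - M))"
    using measure_Un[of "A \<inter> M" "A - M"] assms(1,2) by (simp add: Int Diff Int_Diff_Un)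
  then show ?thesis using assms(3,4) by (simp add: max_def split: if_splits)
qed

lemma measure_negligible: "negligible B mu N \<Longrightarrow> N \<in> B \<Longrightarrow> mu N = 0"
  unfolding negligible_def by (metis le_zero_eq measure_mono)

lemma sigma_maxitive_min: "sigma_maxitive B (\<lambda>A. min c (mu A))"
  unfolding sigma_maxitive_def
proof (intro conjI allI impI)
  fix F assume F: "countable F \<and> F \<subseteq> B"
  show "min c (mu (\<Union>F)) = (SUP A\<in>F. min c (mu A))"
    unfolding measure_Union[OF F[THEN conjunct1] F[THEN conjunct2]]
    by (simp add: inf_min[symmetric] inf_SUP)
qed simp

lemma sigma_ideal_sublevel:
  assumes "C \<in> B" shows "sigma_ideal B {X \<in> B. mu (X \<inter> C) \<le> \<alpha>}"
proof (rule sigma_ideal_Collect[OF sigma_algebra_axioms])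
  fix F assume "countable F" "F \<subseteq> B" and le: "\<forall>X\<in>F. mu (X \<inter> C) \<le> \<alpha>"
  have "\<Union>F \<inter> C = (\<Union>X\<in>F. X \<inter> C)" by blast
  also have "mu \<dots> = (SUP X\<in>F. mu (X \<inter> C))"
    using assms \<open>countable F\<close> \<open>F \<subseteq> B\<close> by (intro measure_UN) auto
  finally show "mu (\<Union>F \<inter> C) \<le> \<alpha>" using le by (simp add: SUP_least)
next
  fix A S assume "A \<in> B" "S \<in> B" "A \<subseteq> S" "mu (S \<inter> C) \<le> \<alpha>"
  then show "mu (A \<inter> C) \<le> \<alpha>"
    using measure_mono[of "A \<inter> C" "S \<inter> C"] assms by (meson Int Int_mono order.trans order_refl)
qed simp

lemma quotient_attained:
  assumes I: "sigma_ideal B I" and A: "A \<in> B"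
  shows "\<exists>S\<in>I. mu (A - S) = (INF S\<in>I. mu (A - S))"
proof -
  have "I \<noteq> {}" using I unfolding sigma_ideal_def by blast
  from ennreal_Inf_countable_INF[of "(\<lambda>S. mu (A - S)) ` I"] this
  obtain f :: "nat \<Rightarrow> ennreal"
    where f: "range f \<subseteq> (\<lambda>S. mu (A - S)) ` I" "(INF S\<in>I. mu (A - S)) = Inf (range f)"
    by auto
  have "\<forall>n. \<exists>S. S \<in> I \<and> f n = mu (A - S)" using f(1) by blast
  then obtain S where S: "\<And>n. S n \<in> I" "\<And>n. f n = mu (A - S n)"
    by metis
  define S0 where "S0 = (\<Union>n. S n)"
  have S0: "S0 \<in> I" unfolding S0_def by (rule sigma_ideal_UN[OF I]) (use S in auto)
  have "mu (A - S0) \<le> f n" for n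
    unfolding S(2) S0_def
    using A S(1) sigma_ideal_sets[OF I] by (intro measure_mono) auto
  then have "mu (A - S0) \<le> (INF S\<in>I. mu (A - S))"
    unfolding f(2) by (rule INF_greatest)
  moreover have "(INF S\<in>I. mu (A - S)) \<le> mu (A - S0)" by (rule INF_lower[OF S0])
  ultimately show ?thesis using S0 by (blast intro: antisym)
qed

lemma sigma_maxitive_quotient:
  assumes I: "sigma_ideal B I"
  shows "sigma_maxitive B (\<lambda>A. INF S\<in>I. mu (A - S))"
  unfolding sigma_maxitive_def
proof (intro conjI allI impI)
  have "{} \<in> I" by (rule sigma_ideal_empty[OF I empty_sets])
  then show "(INF S\<in>I. mu ({} - S)) = 0" by (metis INF_lower Diff_empty measure_empty le_zero_eq)
next
  fix F assume F: "countable F \<and> F \<subseteq> B"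
  have IB: "S \<in> I \<Longrightarrow> S \<in> B" for S by (rule sigma_ideal_sets[OF I])
  have UF: "\<Union>F \<in> B" using F by blast
  obtain g where g: "\<And>A. A \<in> F \<Longrightarrow> g A \<in> I"
    "\<And>A. A \<in> F \<Longrightarrow> mu (A - g A) = (INF S\<in>I. mu (A - S))"
    using bchoice[of F "\<lambda>A S. S \<in> I \<and> mu (A - S) = (INF S\<in>I. mu (A - S))"]
      quotient_attained[OF I] F by blast
  define S where "S = (\<Union>A\<in>F. g A)"
  have S: "S \<in> I" unfolding S_def by (rule sigma_ideal_UN[OF I]) (use F g in auto)
  have "(INF S\<in>I. mu (\<Union>F - S)) \<le> mu (\<Union>F - S)" by (rule INF_lower[OF S])
  also have "\<Union>F - S = (\<Union>A\<in>F. A - S)" by blast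
  also have "mu \<dots> = (SUP A\<in>F. mu (A - S))" using F IB[OF S] by (intro measure_UN) auto
  also have "\<dots> \<le> (SUP A\<in>F. INF S\<in>I. mu (A - S))"
  proof (rule SUP_subset_mono[OF order_refl])
    fix A assume A: "A \<in> F"
    then have "mu (A - S) \<le> mu (A - g A)"
      using F IB[OF S] IB[OF g(1)[OF A]] by (intro measure_mono) (auto simp: S_def)
    then show "mu (A - S) \<le> (INF S\<in>I. mu (A - S))" using g(2)[OF A] by simp
  qed
  finally have "(INF S\<in>I. mu (\<Union>F - S)) \<le> (SUP A\<in>F. INF S\<in>I. mu (A - S))" .
  moreover have "(INF S\<in>I. mu (A - S)) \<le> (INF S\<in>I. mu (\<Union>F - S))" if "A \<in> F" for A
    using that F IB UF by (intro INF_mono bexI[rotated] measure_mono) auto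
  ultimately show "(INF S\<in>I. mu (\<Union>F - S)) = (SUP A\<in>F. INF S\<in>I. mu (A - S))"
    by (blast intro: antisym SUP_least)
qed

end

lemma positive_level_sets_rat:
  fixes c :: "'a \<Rightarrow> ennreal"
  shows "{x\<in>E. 0 < c x} = (\<Union>r\<in>{r::rat. 0 < r}. {x\<in>E. ennreal (of_rat r) < c x})"
proof safe
  fix x assume "x \<in> E" "0 < c x"
  then obtain r where "0 < ennreal (of_rat r)" "ennreal (of_rat r) < c x"
    using ennreal_rat_dense by blast
  then show "x \<in> (\<Union>r\<in>{r. 0 < r}. {x\<in>E. ennreal (of_rat r) < c x})" using \<open>x \<in> E\<close> by auto
qed (auto intro: le_less_trans)

locale pseudo_mult_measure = pseudo_multiplication odot one + tau: maxitive E B tau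
  for odot :: "ennreal \<Rightarrow> ennreal \<Rightarrow> ennreal" (infixl "\<odot>" 70) and one E B tau
begin

lemma odot_le_idem_integral:
  "t < top \<Longrightarrow> t \<odot> tau (A \<inter> {x\<in>E. t < c x}) \<le> idem_integral odot E c tau A"
  unfolding idem_integral_def by (rule SUP_upper) simp

lemma odot_le_idem_integral_of_ge:
  assumes A: "A \<subseteq> E" and ge: "\<And>x. x \<in> A \<Longrightarrow> a \<le> c x"
  shows "a \<odot> tau A \<le> idem_integral odot E c tau A"
proof (cases "a = 0")
  case False
  show ?thesis
  proof (rule odot_le_of_left_approx)
    show "0 < a" using False by (simp add: zero_less_iff_neq_zero)
    fix t assume "0 < t" "t < a"
    then have "A \<inter> {x\<in>E. t < c x} = A" using A ge by (auto intro: less_le_trans)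
    moreover have "t < top" using \<open>t < a\<close> top_greatest by (rule less_le_trans)
    ultimately show "t \<odot> tau A \<le> idem_integral odot E c tau A"
      using odot_le_idem_integral[of t A c] by simp
  qed
qed simp

lemma idem_integral_mono:
  assumes c: "B_measurable E B c" and "A \<in> B" "A' \<in> B" "A \<subseteq> A'"
  shows "idem_integral odot E c tau A \<le> idem_integral odot E c tau A'"
  unfolding idem_integral_def
proof (rule SUP_subset_mono[OF order_refl])
  fix t :: ennreal assume "t \<in> {t. t < top}"
  then have "{x\<in>E. t < c x} \<in> B" using c unfolding B_measurable_def by blast
  then show "t \<odot> tau (A \<inter> {x\<in>E. t < c x}) \<le> t \<odot> tau (A' \<inter> {x\<in>E. t < c x})"
    using assms by (intro odot_mono tau.measure_mono) auto
qed

lemma idem_integral_eq_0: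
  assumes "A \<inter> {x\<in>E. 0 < c x} = {}" shows "idem_integral odot E c tau A = 0"
proof -
  have "A \<inter> {x\<in>E. t < c x} = {}" for t
    using assms le_less_trans[OF zero_le, of t] by blast
  then show ?thesis unfolding idem_integral_def by (intro antisym SUP_least) simp_all
qed

lemma measure_positive_part_eq_0:
  assumes c: "B_measurable E B c" and A: "A \<in> B" and zero: "idem_integral odot E c tau A = 0"
  shows "tau (A \<inter> {x\<in>E. 0 < c x}) = 0"
proof -
  have level: "A \<inter> {x\<in>E. ennreal (of_rat r) < c x} \<in> B" for r
    using A c unfolding B_measurable_def by auto
  have "tau (A \<inter> {x\<in>E. ennreal (of_rat r) < c x}) = 0" if "0 < r" for r
  proof -
    have "ennreal (of_rat r) \<odot> tau (A \<inter> {x\<in>E. ennreal (of_rat r) < c x}) = 0"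
      using odot_le_idem_integral[of "ennreal (of_rat r)" A c] zero by simp
    then show ?thesis using that by simp
  qed
  moreover have "A \<inter> {x\<in>E. 0 < c x} = (\<Union>r\<in>{r. 0 < r}. A \<inter> {x\<in>E. ennreal (of_rat r) < c x})"
    by (subst positive_level_sets_rat) blast
  moreover have "tau (\<Union>r\<in>{r. 0 < r}. A \<inter> {x\<in>E. ennreal (of_rat r) < c x})
      = (SUP r\<in>{r. 0 < r}. tau (A \<inter> {x\<in>E. ennreal (of_rat r) < c x}))"
    using level by (intro tau.measure_UN) auto
  ultimately show ?thesis by (auto intro: antisym SUP_least)
qed

lemma abs_cont_of_le: "(\<And>A. A \<in> B \<Longrightarrow> nu A \<le> tau A) \<Longrightarrow> odot_abs_cont odot B nu tau"
  unfolding odot_abs_cont_def using le_top_odot order_trans by blast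

lemma sigma_odot_finite_if_radon_nikodym:
  assumes nd: "non_degenerate odot one" and rn: "radon_nikodym_property odot E B tau"
  shows "sigma_odot_finite odot E B tau"
proof -
  define nu where "nu A = min one (tau A)" for A
  have "has_density odot E B nu tau"
    using rn tau.sigma_maxitive_min abs_cont_of_le[of nu]
    unfolding radon_nikodym_property_def nu_def by simp
  then obtain c where c: "B_measurable E B c"
    and density: "\<And>A. A \<in> B \<Longrightarrow> nu A = idem_integral odot E c tau A"
    unfolding has_density_def by blast
  have level: "{x\<in>E. t < c x} \<in> B" if "t < top" for t
    using c that unfolding B_measurable_def by blast
  define Z where "Z = E - {x\<in>E. 0 < c x}"
  have Z: "Z \<in> B" unfolding Z_def using level[of 0] by auto
  have "Z \<inter> {x\<in>E. 0 < c x} = {}" unfolding Z_def by blast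
  then have "nu Z = 0" using density[OF Z] idem_integral_eq_0 by simp
  then have "tau Z = 0" using one_neq_zero by (simp add: nu_def min_def split: if_splits)
  define F where "F = insert Z ((\<lambda>r. {x\<in>E. ennreal (of_rat r) < c x}) ` {r. 0 < r})"
  show ?thesis unfolding sigma_odot_finite_def
  proof (intro exI conjI ballI)
    show "countable F" unfolding F_def by simp
    show "F \<subseteq> B" unfolding F_def using Z level by auto
    show "\<Union>F = E" unfolding F_def Z_def using positive_level_sets_rat[of E c] by blast
    fix A assume "A \<in> F"
    then consider "A = Z" | r where "0 < r" "A = {x\<in>E. ennreal (of_rat r) < c x}"
      unfolding F_def by blast
    then show "odot_finite odot (tau A)"
    proof cases
      case 1
      then show ?thesis using \<open>tau Z = 0\<close> odot_finite_0 by simp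
    next
      case (2 r)
      have "ennreal (of_rat r) \<odot> tau A \<le> idem_integral odot E c tau A"
        using 2 by (intro odot_le_idem_integral_of_ge) auto
      also have "\<dots> = nu A" using level 2 by (intro density[symmetric]) simp
      also have "\<dots> \<le> one" by (simp add: nu_def)
      finally have "ennreal (of_rat r) \<odot> tau A \<le> one" .
      then show ?thesis
        by (rule odot_finite_of_odot_le[rotated]) (use nd 2(1) in \<open>simp_all add: non_degenerate_def\<close>)
    qed
  qed
qed

lemma sigma_principal_if_radon_nikodym:
  assumes rn: "radon_nikodym_property odot E B tau"
  shows "sigma_principal B tau"
  unfolding sigma_principal_def
proof (intro allI impI)
  fix I assume I: "sigma_ideal B I"
  define mu where "mu A = (INF S\<in>I. tau (A - S))" for A
  have IB: "S \<in> I \<Longrightarrow> S \<in> B" for S by (rule sigma_ideal_sets[OF I])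
  have mu_le: "mu A \<le> tau (A - S)" if "S \<in> I" for A S unfolding mu_def by (rule INF_lower[OF that])
  have "{} \<in> I" by (rule sigma_ideal_empty[OF I tau.empty_sets])
  then have "has_density odot E B mu tau"
    using rn tau.sigma_maxitive_quotient[OF I] abs_cont_of_le[of mu] mu_le[of "{}"]
    unfolding radon_nikodym_property_def mu_def by simp
  then obtain c where c: "B_measurable E B c"
    and density: "\<And>A. A \<in> B \<Longrightarrow> mu A = idem_integral odot E c tau A"
    unfolding has_density_def by blast
  define P where "P = {x\<in>E. 0 < c x}"
  have P: "P \<in> B" using c unfolding P_def B_measurable_def by simp
  define Z where "Z = E - P"
  have Z: "Z \<in> B" unfolding Z_def using P by blast
  have "Z \<inter> {x\<in>E. 0 < c x} = {}" unfolding Z_def P_def by blast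
  then have "mu Z = 0" using density[OF Z] idem_integral_eq_0 by simp
  then obtain S0 where S0: "S0 \<in> I" "tau (Z - S0) = 0"
    using tau.quotient_attained[OF I Z] unfolding mu_def by auto
  have null_on_P: "tau (S \<inter> P) = 0" if "S \<in> I" for S
  proof -
    have "mu S = 0" using mu_le[OF that, of S] by simp
    then show ?thesis
      unfolding P_def using density[OF IB[OF that]] by (intro measure_positive_part_eq_0 c IB that) simp
  qed
  have L: "Z \<inter> S0 \<in> I" by (rule sigma_ideal_downward[OF I _ S0(1)]) (use Z IB[OF S0(1)] in auto)
  show "\<exists>L\<in>I. \<forall>S\<in>I. negligible B tau (S - L)"
  proof (intro bexI[OF _ L] ballI)
    fix S assume S: "S \<in> I"
    have N: "S \<inter> P \<in> B" "Z - S0 \<in> B" using P Z IB S S0(1) by blast+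
    then have "tau (S \<inter> P \<union> (Z - S0)) = 0"
      using tau.measure_Un null_on_P[OF S] S0(2) by simp
    moreover have "S - Z \<inter> S0 \<subseteq> S \<inter> P \<union> (Z - S0)"
      using IB[OF S] tau.sets_into_space unfolding Z_def by blast
    ultimately show "negligible B tau (S - Z \<inter> S0)" unfolding negligible_def using tau.Un[OF N] by blast
  qed
qed

end

locale dominated = pseudo_mult_measure odot one E B tau + nu: maxitive E B nu
  for odot :: "ennreal \<Rightarrow> ennreal \<Rightarrow> ennreal" (infixl "\<odot>" 70) and one E B tau nu +
  assumes abs_cont: "odot_abs_cont odot B nu tau"
begin

lemma null_if_tau_null: "A \<in> B \<Longrightarrow> tau A = 0 \<Longrightarrow> nu A = 0"
  using abs_cont odot_finite_0 unfolding odot_abs_cont_def by force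

lemma sigma_ideal_dominated: "sigma_ideal B {X \<in> B. \<forall>C\<in>B. C \<subseteq> X \<longrightarrow> nu C \<le> q \<odot> tau C}"
proof (rule sigma_ideal_Collect[OF tau.sigma_algebra_axioms])
  fix F assume F: "countable F" "F \<subseteq> B"
    and le: "\<forall>X\<in>F. \<forall>C\<in>B. C \<subseteq> X \<longrightarrow> nu C \<le> q \<odot> tau C"
  show "\<forall>C\<in>B. C \<subseteq> \<Union>F \<longrightarrow> nu C \<le> q \<odot> tau C"
  proof (intro ballI impI)
    fix C assume C: "C \<in> B" "C \<subseteq> \<Union>F"
    then have "C = (\<Union>X\<in>F. C \<inter> X)" by blast
    also have "nu \<dots> = (SUP X\<in>F. nu (C \<inter> X))" using F C by (intro nu.measure_UN) auto
    also have "\<dots> \<le> q \<odot> tau C"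
    proof (rule SUP_least)
      fix X assume "X \<in> F"
      then have "nu (C \<inter> X) \<le> q \<odot> tau (C \<inter> X)" using le F C by blast
      also have "\<dots> \<le> q \<odot> tau C" using \<open>X \<in> F\<close> F C by (intro odot_mono tau.measure_mono) auto
      finally show "nu (C \<inter> X) \<le> q \<odot> tau C" .
    qed
    finally show "nu C \<le> q \<odot> tau C" .
  qed
qed auto

lemma odot_le_nu_if_dominated_subsets_null:
  assumes sp: "sigma_principal B tau" and q: "q < top" and C: "C \<in> B"
    and null: "\<And>X. X \<in> B \<Longrightarrow> X \<subseteq> C \<Longrightarrow> \<forall>Y\<in>B. Y \<subseteq> X \<longrightarrow> nu Y \<le> q \<odot> tau Y \<Longrightarrow> tau X = 0"
  shows "q \<odot> tau C \<le> nu C"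
proof -
  define \<alpha> where "\<alpha> = Sup {y. q \<odot> y < nu C}"
  \<comment> \<open>A principal element \<open>P\<close> of the ideal where \<open>\<tau>(\<cdot> \<inter> C) \<le> \<alpha>\<close> leaves \<open>C - P\<close> dominated by \<open>q \<odot> \<tau>\<close>,
     hence \<open>\<tau>\<close>-null, so \<open>\<tau> C \<le> \<alpha>\<close>.\<close>
  let ?K = "{X \<in> B. tau (X \<inter> C) \<le> \<alpha>}"
  obtain P where P: "P \<in> ?K" "\<And>X. X \<in> ?K \<Longrightarrow> negligible B tau (X - P)"
    using sp[unfolded sigma_principal_def, rule_format, OF tau.sigma_ideal_sublevel[OF C, of \<alpha>]]
    by blast
  have "nu X \<le> q \<odot> tau X" if X: "X \<in> B" "X \<subseteq> C - P" for X
  proof (cases "tau X \<le> \<alpha>")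
    case True
    have "X \<inter> C = X" "X - P = X" using X by blast+
    then have "negligible B tau X" using P(2)[of X] X True by simp
    then have "tau X = 0" using X(1) by (rule tau.measure_negligible)
    then show ?thesis using null_if_tau_null X by simp
  next
    case False
    have "\<not> q \<odot> tau X < nu C"
    proof
      assume "q \<odot> tau X < nu C"
      then have "tau X \<le> \<alpha>" unfolding \<alpha>_def by (simp add: Sup_upper)
      with False show False ..
    qed
    then have "nu C \<le> q \<odot> tau X" by simp
    moreover have "nu X \<le> nu C" using X C by (intro nu.measure_mono) auto
    ultimately show ?thesis by simp
  qed
  then have "tau (C - P) = 0" using C P by (intro null) auto
  moreover have "tau (C \<inter> P \<union> (C - P)) = max (tau (C \<inter> P)) (tau (C - P))"
    using C P by (intro tau.measure_Un) auto
  moreover have "C \<inter> P \<union> (C - P) = C" by blast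
  ultimately have "tau C = tau (P \<inter> C)" by (simp add: Int_commute)
  then have "tau C \<le> \<alpha>" using P by simp
  then have "q \<odot> tau C \<le> q \<odot> \<alpha>" by (simp add: odot_mono)
  also have "\<dots> \<le> nu C" unfolding \<alpha>_def using q by (rule odot_Sup_below_le)
  finally show ?thesis .
qed

lemma hahn_decomposition:
  assumes sp: "sigma_principal B tau" and q: "q < top"
  obtains L where "L \<in> B" "\<And>C. C \<in> B \<Longrightarrow> C \<subseteq> L \<Longrightarrow> nu C \<le> q \<odot> tau C"
    "\<And>C. C \<in> B \<Longrightarrow> C \<subseteq> E - L \<Longrightarrow> q \<odot> tau C \<le> nu C"
proof -
  let ?I = "{X \<in> B. \<forall>C\<in>B. C \<subseteq> X \<longrightarrow> nu C \<le> q \<odot> tau C}"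
  obtain L where L: "L \<in> ?I" "\<And>S. S \<in> ?I \<Longrightarrow> negligible B tau (S - L)"
    using sp[unfolded sigma_principal_def, rule_format, OF sigma_ideal_dominated[of q]] by blast
  have "q \<odot> tau C \<le> nu C" if C: "C \<in> B" "C \<subseteq> E - L" for C
  proof (rule odot_le_nu_if_dominated_subsets_null[OF sp q C(1)])
    fix X assume "X \<in> B" "X \<subseteq> C" "\<forall>Y\<in>B. Y \<subseteq> X \<longrightarrow> nu Y \<le> q \<odot> tau Y"
    moreover have "X - L = X" using C \<open>X \<subseteq> C\<close> by blast
    ultimately show "tau X = 0" using L(2)[of X] tau.measure_negligible by simp
  qed
  then show ?thesis by (rule that[rotated 2]) (use L(1) in auto)
qed

end

locale hahn_chain = dominated odot one E B tau nu
  for odot :: "ennreal \<Rightarrow> ennreal \<Rightarrow> ennreal" (infixl "\<odot>" 70) and one E B tau nu +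
  fixes L :: "rat \<Rightarrow> 'a set"
  assumes chain_sets: "L r \<in> B"
    and chain_mono: "r \<le> s \<Longrightarrow> L r \<subseteq> L s"
    and nu_le_on_chain: "C \<in> B \<Longrightarrow> C \<subseteq> L r \<Longrightarrow> nu C \<le> ennreal (of_rat r) \<odot> tau C"
    and nu_ge_off_chain: "C \<in> B \<Longrightarrow> C \<subseteq> E - L r \<Longrightarrow> ennreal (of_rat r) \<odot> tau C \<le> nu C"
begin

text \<open>Off every \<open>L r\<close> the infimum is taken over the empty set, so the density is \<open>\<infinity>\<close> there.\<close>

definition chain_density :: "'a \<Rightarrow> ennreal" where
  "chain_density x = (INF r\<in>{r. x \<in> L r}. ennreal (of_rat r))"

lemma less_chain_density_iff: "t < chain_density x \<longleftrightarrow> (\<exists>r. t < ennreal (of_rat r) \<and> x \<notin> L r)"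
proof
  assume "t < chain_density x"
  then obtain r where r: "t < ennreal (of_rat r)" "ennreal (of_rat r) < chain_density x"
    using ennreal_rat_dense by blast
  have "x \<notin> L r"
  proof
    assume "x \<in> L r"
    then have "chain_density x \<le> ennreal (of_rat r)" unfolding chain_density_def by (intro INF_lower) simp
    with r(2) show False by simp
  qed
  with r(1) show "\<exists>r. t < ennreal (of_rat r) \<and> x \<notin> L r" by blast
next
  assume "\<exists>r. t < ennreal (of_rat r) \<and> x \<notin> L r"
  then obtain r where r: "t < ennreal (of_rat r)" "x \<notin> L r" by blast
  have "ennreal (of_rat r) \<le> chain_density x"
    unfolding chain_density_def
  proof (rule INF_greatest)
    fix s assume "s \<in> {s. x \<in> L s}"
    then have "r \<le> s" using r(2) chain_mono[of s r] by (cases "s \<le> r") auto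
    then show "ennreal (of_rat r) \<le> ennreal (of_rat s)" by (simp add: ennreal_leI of_rat_less_eq)
  qed
  with r(1) show "t < chain_density x" by simp
qed

lemma chain_density_level_set: "{x\<in>E. t < chain_density x} = (\<Union>r\<in>{r. t < ennreal (of_rat r)}. E - L r)"
  using less_chain_density_iff by blast

lemma chain_density_measurable: "B_measurable E B chain_density"
  unfolding B_measurable_def chain_density_level_set using chain_sets
  by (intro allI impI tau.countable_UN'') auto

lemma odot_le_idem_integral_chain_density:
  assumes "A \<in> B" "D \<in> B" "A \<subseteq> D" "\<And>x. x \<in> A \<Longrightarrow> a \<le> chain_density x"
  shows "a \<odot> tau A \<le> idem_integral odot E chain_density tau D"
  using odot_le_idem_integral_of_ge[where A=A and c=chain_density and a=a] idem_integral_mono[OF chain_density_measurable]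
    assms tau.sets_into_space order_trans by meson

lemma idem_integral_chain_density_le:
  assumes A: "A \<in> B" shows "idem_integral odot E chain_density tau A \<le> nu A"
  unfolding idem_integral_def
proof (rule SUP_least)
  fix t :: ennreal assume "t \<in> {t. t < top}"
  then have t: "t < top" by simp
  have "A \<inter> {x\<in>E. t < chain_density x} = (\<Union>r\<in>{r. t < ennreal (of_rat r)}. A - L r)"
    unfolding chain_density_level_set using A tau.sets_into_space by blast
  also have "tau \<dots> = (SUP r\<in>{r. t < ennreal (of_rat r)}. tau (A - L r))"
    using A chain_sets by (intro tau.measure_UN) auto
  finally have level: "tau (A \<inter> {x\<in>E. t < chain_density x}) = \<dots>" .
  show "t \<odot> tau (A \<inter> {x\<in>E. t < chain_density x}) \<le> nu A"
  proof (rule odot_le_of_right_approx[OF t])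
    fix y assume "y < tau (A \<inter> {x\<in>E. t < chain_density x})"
    then obtain r where r: "t < ennreal (of_rat r)" "y < tau (A - L r)"
      unfolding level less_SUP_iff by blast
    have "t \<odot> y \<le> ennreal (of_rat r) \<odot> tau (A - L r)" using r by (intro odot_mono) auto
    also have "\<dots> \<le> nu (A - L r)"
      using A chain_sets tau.sets_into_space by (intro nu_ge_off_chain) auto
    also have "\<dots> \<le> nu A" using A chain_sets by (intro nu.measure_mono) auto
    finally show "t \<odot> y \<le> nu A" .
  qed
qed

lemma nu_off_chain_le:
  assumes D: "D \<in> B" and fin: "odot_finite odot (tau D)"
  shows "nu (D - (\<Union>r. L r)) \<le> idem_integral odot E chain_density tau D"
proof -
  have DU: "D - (\<Union>r. L r) \<in> B" using D chain_sets by blast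
  have "odot_finite odot (tau (D - (\<Union>r. L r)))"
    using fin D DU by (intro odot_finite_mono[OF fin] tau.measure_mono) auto
  then have "nu (D - (\<Union>r. L r)) \<le> top \<odot> tau (D - (\<Union>r. L r))"
    using abs_cont DU unfolding odot_abs_cont_def by blast
  also have "\<dots> \<le> idem_integral odot E chain_density tau D"
    using D DU by (intro odot_le_idem_integral_chain_density) (auto simp: chain_density_def)
  finally show ?thesis .
qed

lemma nu_on_chain_le:
  assumes D: "D \<in> B" and fin: "odot_finite odot (tau D)"
    and less: "idem_integral odot E chain_density tau D < \<rho>"
  shows "nu (D \<inter> L r) \<le> \<rho>"
proof (rule ccontr)
  define G where "G = {r. \<rho> < nu (D \<inter> L r)}"
  assume "\<not> nu (D \<inter> L r) \<le> \<rho>"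
  then have r: "r \<in> G" unfolding G_def by simp
  \<comment> \<open>On \<open>Q r\<close> the density is at least the critical level \<open>a\<close>, so \<open>a \<odot> \<tau>(Q r) < \<rho>\<close>; by right
     continuity this persists for rational levels of \<open>G\<close> just above \<open>a\<close>, contradicting \<open>\<rho> < \<nu>(Q s)\<close>.\<close>
  define a where "a = (INF r\<in>G. ennreal (of_rat r))"
  have a_le: "a \<le> ennreal (of_rat s)" if "s \<in> G" for s unfolding a_def using that by (rule INF_lower)
  define M where "M = (\<Union>s\<in>{s. ennreal (of_rat s) < a}. L s)"
  define Q where "Q s = D \<inter> L s - M" for s
  have M: "M \<in> B" unfolding M_def using chain_sets by (auto intro!: tau.countable_UN'')
  have Q: "Q s \<in> B" for s unfolding Q_def using D M chain_sets by blast
  have "nu (D \<inter> M) = (SUP s\<in>{s. ennreal (of_rat s) < a}. nu (D \<inter> L s))"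
    unfolding M_def Int_UN_distrib using D chain_sets by (intro nu.measure_UN) auto
  also have "\<dots> \<le> \<rho>" using a_le by (intro SUP_least) (force simp: G_def not_less)
  finally have DM: "nu (D \<inter> M) \<le> \<rho>" .
  have Q_large: "\<rho> < nu (Q s)" if "s \<in> G" for s
  proof -
    have "nu (D \<inter> L s \<inter> M) \<le> nu (D \<inter> M)" using D M chain_sets by (intro nu.measure_mono) auto
    then show ?thesis
      unfolding Q_def using that DM D M chain_sets by (intro nu.less_measure_Diff) (auto simp: G_def)
  qed
  have "a \<le> chain_density x" if "x \<in> Q r" for x
    unfolding chain_density_def using that by (intro INF_greatest) (auto simp: Q_def M_def not_less[symmetric])
  then have "a \<odot> tau (Q r) \<le> idem_integral odot E chain_density tau D"
    using Q D by (intro odot_le_idem_integral_chain_density) (auto simp: Q_def)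
  then have a_less: "a \<odot> tau (Q r) < \<rho>" using less by simp
  have fin_Q: "odot_finite odot (tau (Q r))"
    using Q D by (intro odot_finite_mono[OF fin] tau.measure_mono) (auto simp: Q_def)
  have "a < top" using a_le[OF r] by (simp add: le_less_trans)
  then obtain b where b: "a < b" "\<And>s. a \<le> s \<Longrightarrow> s < b \<Longrightarrow> s \<odot> tau (Q r) < \<rho>"
    using odot_less_right_neighbourhood[OF _ a_less] fin_Q by blast
  then obtain s where s: "s \<in> G" "ennreal (of_rat s) < b"
    unfolding a_def INF_less_iff by blast
  define s' where "s' = min s r"
  have "ennreal (of_rat s') \<le> ennreal (of_rat s)" by (simp add: s'_def ennreal_leI of_rat_less_eq)
  then have s': "s' \<in> G" "s' \<le> r" "ennreal (of_rat s') < b"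
    using s r by (auto simp: s'_def min_def)
  have "\<rho> < nu (Q s')" by (rule Q_large[OF s'(1)])
  also have "\<dots> \<le> ennreal (of_rat s') \<odot> tau (Q s')"
    using Q by (intro nu_le_on_chain) (auto simp: Q_def)
  also have "\<dots> \<le> ennreal (of_rat s') \<odot> tau (Q r)"
    using Q chain_mono[OF s'(2)] by (intro odot_mono tau.measure_mono) (auto simp: Q_def)
  also have "\<dots> < \<rho>" using b(2) a_le[OF s'(1)] s'(3) by blast
  finally show False .
qed

lemma le_idem_integral_chain_density_finite:
  assumes D: "D \<in> B" and fin: "odot_finite odot (tau D)"
  shows "nu D \<le> idem_integral odot E chain_density tau D"
proof (rule dense_ge)
  fix \<rho> assume less: "idem_integral odot E chain_density tau D < \<rho>"
  let ?U = "\<Union>r. L r"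
  have "nu (D \<inter> ?U) = (SUP r. nu (D \<inter> L r))"
    unfolding Int_UN_distrib using D chain_sets by (intro nu.measure_UN) auto
  also have "\<dots> \<le> \<rho>" using nu_on_chain_le[OF D fin less] by (rule SUP_least)
  finally have "nu (D \<inter> ?U) \<le> \<rho>" .
  moreover have "nu (D - ?U) \<le> \<rho>" using nu_off_chain_le[OF D fin] less by simp
  moreover have "nu D = max (nu (D \<inter> ?U)) (nu (D - ?U))"
    using D chain_sets by (subst nu.measure_Un[symmetric]) (auto simp: Int_Diff_Un)
  ultimately show "nu D \<le> \<rho>" by simp
qed

end

context dominated
begin

lemma hahn_chain_exists:
  assumes sp: "sigma_principal B tau"
  obtains L where "hahn_chain odot one E B tau nu L"
proof -
  have "\<exists>H. H \<in> B \<and> (\<forall>C\<in>B. C \<subseteq> H \<longrightarrow> nu C \<le> ennreal (of_rat r) \<odot> tau C)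
      \<and> (\<forall>C\<in>B. C \<subseteq> E - H \<longrightarrow> ennreal (of_rat r) \<odot> tau C \<le> nu C)" for r :: rat
    by (rule hahn_decomposition[OF sp, of "ennreal (of_rat r)"]) (simp, blast)
  then obtain H where H: "\<And>r. H r \<in> B"
    "\<And>r C. C \<in> B \<Longrightarrow> C \<subseteq> H r \<Longrightarrow> nu C \<le> ennreal (of_rat r) \<odot> tau C"
    "\<And>r C. C \<in> B \<Longrightarrow> C \<subseteq> E - H r \<Longrightarrow> ennreal (of_rat r) \<odot> tau C \<le> nu C"
    by metis
  define L where "L r = (\<Union>s\<in>{s. s \<le> r}. H s)" for r
  have L: "L r \<in> B" for r unfolding L_def using H(1) by (intro tau.countable_UN') auto
  have below: "nu C \<le> ennreal (of_rat r) \<odot> tau C" if C: "C \<in> B" "C \<subseteq> L r" for r C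
  proof -
    have "C = (\<Union>s\<in>{s. s \<le> r}. C \<inter> H s)" using C unfolding L_def by blast
    also have "nu \<dots> = (SUP s\<in>{s. s \<le> r}. nu (C \<inter> H s))"
      using C H(1) by (intro nu.measure_UN) auto
    also have "\<dots> \<le> ennreal (of_rat r) \<odot> tau C"
    proof (rule SUP_least)
      fix s assume "s \<in> {s. s \<le> r}"
      then have "ennreal (of_rat s) \<le> ennreal (of_rat r)" by (simp add: ennreal_leI of_rat_less_eq)
      moreover have "nu (C \<inter> H s) \<le> ennreal (of_rat s) \<odot> tau (C \<inter> H s)"
        using C H(1) by (intro H(2)) auto
      moreover have "tau (C \<inter> H s) \<le> tau C" using C H(1) by (intro tau.measure_mono) auto
      ultimately show "nu (C \<inter> H s) \<le> ennreal (of_rat r) \<odot> tau C"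
        using odot_mono order_trans by meson
    qed
    finally show ?thesis .
  qed
  have above: "ennreal (of_rat r) \<odot> tau C \<le> nu C" if "C \<in> B" "C \<subseteq> E - L r" for r C
    using that by (intro H(3)) (auto simp: L_def)
  show ?thesis
  proof (rule that, unfold_locales)
    fix r s :: rat assume "r \<le> s"
    then show "L r \<subseteq> L s" unfolding L_def by (auto intro: order.trans)
  qed (fact L, fact below, fact above)
qed

end

context hahn_chain
begin

lemma le_idem_integral_chain_density:
  assumes sf: "sigma_odot_finite odot E B tau" and A: "A \<in> B"
  shows "nu A \<le> idem_integral odot E chain_density tau A"
proof -
  obtain F where F: "countable F" "F \<subseteq> B" "\<Union>F = E" "\<And>X. X \<in> F \<Longrightarrow> odot_finite odot (tau X)"
    using sf unfolding sigma_odot_finite_def by blast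
  have "A = (\<Union>X\<in>F. A \<inter> X)" using A F(3) tau.sets_into_space by blast
  also have "nu \<dots> = (SUP X\<in>F. nu (A \<inter> X))" using A F by (intro nu.measure_UN) auto
  also have "\<dots> \<le> idem_integral odot E chain_density tau A"
  proof (rule SUP_least)
    fix X assume X: "X \<in> F"
    then have AX: "A \<inter> X \<in> B" using A F(2) by blast
    then have "odot_finite odot (tau (A \<inter> X))"
      using X F by (intro odot_finite_mono[OF F(4)[OF X]] tau.measure_mono) auto
    then have "nu (A \<inter> X) \<le> idem_integral odot E chain_density tau (A \<inter> X)"
      by (rule le_idem_integral_chain_density_finite[OF AX])
    also have "\<dots> \<le> idem_integral odot E chain_density tau A"
      using AX A by (intro idem_integral_mono chain_density_measurable) auto
    finally show "nu (A \<inter> X) \<le> idem_integral odot E chain_density tau A" .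
  qed
  finally show ?thesis .
qed

lemma has_density_chain_density:
  assumes "sigma_odot_finite odot E B tau" shows "has_density odot E B nu tau"
  unfolding has_density_def
  using chain_density_measurable idem_integral_chain_density_le le_idem_integral_chain_density[OF assms]
  by (blast intro: antisym)

end

context pseudo_mult_measure
begin

lemma radon_nikodym_if_sigma_odot_finite_principal:
  assumes sf: "sigma_odot_finite odot E B tau" and sp: "sigma_principal B tau"
  shows "radon_nikodym_property odot E B tau"
  unfolding radon_nikodym_property_def
proof (intro allI impI)
  fix nu assume "sigma_maxitive B nu \<and> odot_abs_cont odot B nu tau"
  then interpret dominated odot one E B tau nu by unfold_locales auto
  obtain L where "hahn_chain odot one E B tau nu L" by (rule hahn_chain_exists[OF sp])
  then show "has_density odot E B nu tau" using sf by (rule hahn_chain.has_density_chain_density)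
qed

end

theorem mainTheorem1:
  fixes odot :: "ennreal \<Rightarrow> ennreal \<Rightarrow> ennreal" and one :: ennreal
    and E :: "'a set" and B :: "'a set set" and tau :: "'a set \<Rightarrow> ennreal"
  assumes "pseudo_mult odot one" and "non_degenerate odot one"
    and "E \<noteq> {}" and "sigma_algebra E B" and "sigma_maxitive B tau"
  shows "radon_nikodym_property odot E B tau \<longleftrightarrow>
           sigma_odot_finite odot E B tau \<and> sigma_principal B tau"
proof -
  interpret pseudo_mult_measure odot one E B tau
    using assms by (simp add: pseudo_mult_measure_def pseudo_multiplication_def maxitive_def maxitive_axioms_def)
  show ?thesis
    using sigma_odot_finite_if_radon_nikodym[OF assms(2)] sigma_principal_if_radon_nikodym
      radon_nikodym_if_sigma_odot_finite_principal by blast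
qed

end
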